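(* Let $C$ be a set, $d$ a small category, and $p,q,r$ $(C\mathcal y,d)$-bicomodules. Define $$p\otimes_{C\mathcal y,d}q:=\sum_{a\in C}\sum_{(i,j)\in p_a(1)\times q_a(1)}\mathcal y^{\,p[i]\times_{d(1)}q[j]},\qquad [q,r]_{C\mathcal y,d}:=\sum_{a\in C}\ \sum_{\varphi\in\mathbf{Set}[d](q_a,r_a)}\mathcal y^{\,\sum_{j\in q_a(1)}r[\varphi(j)]},$$ where $p[i]\times_{d(1)}q[j]$ is the product of the $d$-copresheaves $p[i]$ and $q[j]$, and $\sum_{j}r[\varphi(j)]$ is the coproduct of $d$-copresheaves. Then $[q,r]_{C\mathcal y,d}$ has a natural $(C\mathcal y,d)$-bicomodule structure, functorial (contravariantly in $q$, covariantly in $r$), and there is a natural isomorphism $$C\text{-}\mathbf{Set}[d]\big(p\otimes_{C\mathcal y,d}q,\ r\big)\cong C\text{-}\mathbf{Set}[d]\big(p,\ [q,r]_{C\mathcal y,d}\big).$$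
   Context: Small categories are comonoids in $(\mathbf{Poly},\mathcal y,\triangleleft)$; $C\mathcal y$ is the discrete category on $C$. $C\text{-}\mathbf{Set}[d]$ denotes the category of $(C\mathcal y,d)$-bicomodules (polynomials $m$ with compatible coactions $m\to C\mathcal y\triangleleft m$, $m\to m\triangleleft d$) and bicomodule maps. For such $m$ and $a\in C$, $m_a$ is the summand of $m$ over $a$, so $m\cong\sum_{a\in C}m_a$, and for each position $i$ the right coaction makes the direction set $m[i]$ (the set of elements of) a $d$-copresheaf. Each $m_a$ is thus a duc-query $X\mapsto\sum_{i\in m_a(1)}d\text{-}\mathbf{Set}(m[i],X)$; $\mathbf{Set}[d](q_a,r_a)$ is the set of natural transformations between these functors $d\text{-}\mathbf{Set}\to\mathbf{Set}$, and such a $\varphi$ sends each position $j\in q_a(1)$ to a position $\varphi(j)\in r_a(1)$ (together with a map $r[\varphi(j)]\to q[j]$ of $d$-copresheaves). *)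

theory Defs
  imports Main "HOL-Library.FuncSet"
begin

section \<open>Small categories (comonoids in Poly) presented by objects and arrows\<close>

record ('o,'m) cat =
  cob  :: "'o set"
  car  :: "'m set"
  cdom :: "'m \<Rightarrow> 'o"
  ccod :: "'m \<Rightarrow> 'o"
  cid  :: "'o \<Rightarrow> 'm"
  ccomp :: "'m \<Rightarrow> 'm \<Rightarrow> 'm"   (* ccomp d g f = g o f *)

definition small_cat :: "('o,'m) cat \<Rightarrow> bool" where
  "small_cat d \<longleftrightarrow>
     (\<forall>f\<in>car d. cdom d f \<in> cob d \<and> ccod d f \<in> cob d) \<and>
     (\<forall>x\<in>cob d. cid d x \<in> car d \<and> cdom d (cid d x) = x \<and> ccod d (cid d x) = x) \<and>
     (\<forall>f\<in>car d. \<forall>g\<in>car d. ccod d f = cdom d g \<longrightarrow>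
        ccomp d g f \<in> car d \<and> cdom d (ccomp d g f) = cdom d f \<and> ccod d (ccomp d g f) = ccod d g) \<and>
     (\<forall>f\<in>car d. ccomp d f (cid d (cdom d f)) = f \<and> ccomp d (cid d (ccod d f)) f = f) \<and>
     (\<forall>f\<in>car d. \<forall>g\<in>car d. \<forall>h\<in>car d. ccod d f = cdom d g \<longrightarrow> ccod d g = cdom d h \<longrightarrow>
        ccomp d h (ccomp d g f) = ccomp d (ccomp d h g) f)"

text \<open>A d-copresheaf is a set X of elements, each lying over an object (ob),
  with a covariant action of arrows (act f x lies over ccod f when x lies over cdom f).\<close>

definition copresheaf :: "('o,'m) cat \<Rightarrow> 'e set \<Rightarrow> ('e \<Rightarrow> 'o) \<Rightarrow> ('m \<Rightarrow> 'e \<Rightarrow> 'e) \<Rightarrow> bool" where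
  "copresheaf d X ob act \<longleftrightarrow>
     (\<forall>x\<in>X. ob x \<in> cob d) \<and>
     (\<forall>f\<in>car d. \<forall>x\<in>X. ob x = cdom d f \<longrightarrow> act f x \<in> X \<and> ob (act f x) = ccod d f) \<and>
     (\<forall>x\<in>X. act (cid d (ob x)) x = x) \<and>
     (\<forall>f\<in>car d. \<forall>g\<in>car d. \<forall>x\<in>X. ob x = cdom d f \<longrightarrow> ccod d f = cdom d g \<longrightarrow>
        act (ccomp d g f) x = act g (act f x))"

definition cmor :: "('o,'m) cat \<Rightarrow> 'e set \<Rightarrow> ('e \<Rightarrow> 'o) \<Rightarrow> ('m \<Rightarrow> 'e \<Rightarrow> 'e)
    \<Rightarrow> 'f set \<Rightarrow> ('f \<Rightarrow> 'o) \<Rightarrow> ('m \<Rightarrow> 'f \<Rightarrow> 'f) \<Rightarrow> ('e \<Rightarrow> 'f) \<Rightarrow> bool" where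
  "cmor d X obX actX Y obY actY h \<longleftrightarrow>
     h \<in> PiE X (\<lambda>_. Y) \<and>
     (\<forall>x\<in>X. obY (h x) = obX x) \<and>
     (\<forall>f\<in>car d. \<forall>x\<in>X. obX x = cdom d f \<longrightarrow> h (actX f x) = actY f (h x))"

text \<open>A (Cy,d)-bicomodule m: a set of positions bpos, each labelled (left coaction) by an
  element of C, and each position i carrying a direction set bdir i which the right coaction
  makes into (the set of elements of) a d-copresheaf.\<close>

record ('c,'i,'e,'o,'m) bicomod =
  bpos :: "'i set"
  blab :: "'i \<Rightarrow> 'c"
  bdir :: "'i \<Rightarrow> 'e set"
  bob  :: "'i \<Rightarrow> 'e \<Rightarrow> 'o"
  bact :: "'i \<Rightarrow> 'm \<Rightarrow> 'e \<Rightarrow> 'e"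

definition wf_bicomod :: "'c set \<Rightarrow> ('o,'m) cat \<Rightarrow> ('c,'i,'e,'o,'m) bicomod \<Rightarrow> bool" where
  "wf_bicomod C d m \<longleftrightarrow> blab m ` bpos m \<subseteq> C \<and>
     (\<forall>i\<in>bpos m. copresheaf d (bdir m i) (bob m i) (bact m i))"

definition bhom :: "('o,'m) cat \<Rightarrow> ('c,'i,'e,'o,'m) bicomod \<Rightarrow> ('c,'j,'f,'o,'m) bicomod
    \<Rightarrow> (('i \<Rightarrow> 'j) \<times> ('i \<Rightarrow> 'f \<Rightarrow> 'e)) set" where
  "bhom d m n = {(g,h). g \<in> PiE (bpos m) (\<lambda>_. bpos n) \<and>
      (\<forall>i\<in>bpos m. blab n (g i) = blab m i) \<and>
      h \<in> extensional (bpos m) \<and>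
      (\<forall>i\<in>bpos m. cmor d (bdir n (g i)) (bob n (g i)) (bact n (g i))
                          (bdir m i) (bob m i) (bact m i) (h i))}"

definition bid :: "('c,'i,'e,'o,'m) bicomod \<Rightarrow> ('i \<Rightarrow> 'i) \<times> ('i \<Rightarrow> 'e \<Rightarrow> 'e)" where
  "bid m = (\<lambda>i\<in>bpos m. i, \<lambda>i\<in>bpos m. \<lambda>x\<in>bdir m i. x)"

text \<open>Composition: for F : m \<rightarrow> n and G : n \<rightarrow> k, bcomp m k F G is G after F.\<close>

definition bcomp :: "('c,'i,'e,'o,'m) bicomod \<Rightarrow> ('c,'k,'g,'o,'m) bicomod
    \<Rightarrow> ('i \<Rightarrow> 'j) \<times> ('i \<Rightarrow> 'f \<Rightarrow> 'e) \<Rightarrow> ('j \<Rightarrow> 'k) \<times> ('j \<Rightarrow> 'g \<Rightarrow> 'f)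
    \<Rightarrow> ('i \<Rightarrow> 'k) \<times> ('i \<Rightarrow> 'g \<Rightarrow> 'e)" where
  "bcomp m k F G =
     (\<lambda>i\<in>bpos m. fst G (fst F i),
      \<lambda>i\<in>bpos m. \<lambda>x\<in>bdir k (fst G (fst F i)). snd F i (snd G (fst F i) x))"

definition tensor :: "('c,'i,'e,'o,'m) bicomod \<Rightarrow> ('c,'j,'f,'o,'m) bicomod
    \<Rightarrow> ('c, 'i \<times> 'j, 'e \<times> 'f, 'o, 'm) bicomod" where
  "tensor p q = \<lparr> bpos = {(i,j). i \<in> bpos p \<and> j \<in> bpos q \<and> blab p i = blab q j},
     blab = (\<lambda>(i,j). blab p i),
     bdir = (\<lambda>(i,j). {(x,y). x \<in> bdir p i \<and> y \<in> bdir q j \<and> bob p i x = bob q j y}),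
     bob = (\<lambda>(i,j) (x,y). bob p i x),
     bact = (\<lambda>(i,j) f (x,y). (bact p i f x, bact q j f y)) \<rparr>"

definition tensor_map :: "('c,'i,'e,'o,'m) bicomod \<Rightarrow> ('c,'j,'f,'o,'m) bicomod
    \<Rightarrow> ('c,'i2,'e2,'o,'m) bicomod \<Rightarrow> ('c,'j2,'f2,'o,'m) bicomod
    \<Rightarrow> ('i2 \<Rightarrow> 'i) \<times> ('i2 \<Rightarrow> 'e \<Rightarrow> 'e2) \<Rightarrow> ('j2 \<Rightarrow> 'j) \<times> ('j2 \<Rightarrow> 'f \<Rightarrow> 'f2)
    \<Rightarrow> ('i2 \<times> 'j2 \<Rightarrow> 'i \<times> 'j) \<times> ('i2 \<times> 'j2 \<Rightarrow> 'e \<times> 'f \<Rightarrow> 'e2 \<times> 'f2)" where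
  "tensor_map p q p' q' A B =
     (restrict (\<lambda>(i,j). (fst A i, fst B j)) (bpos (tensor p' q')),
      restrict (\<lambda>(i,j). restrict (\<lambda>(x,y). (snd A i x, snd B j y))
                                (bdir (tensor p q) (fst A i, fst B j)))
               (bpos (tensor p' q')))"

text \<open>Set[d](q_a, r_a): natural transformations between the duc-queries q_a and r_a,
  presented (Yoneda) by a label-preserving map on positions j \<mapsto> \<phi>(j) together with
  copresheaf maps r[\<phi>(j)] \<rightarrow> q[j].\<close>

definition qrmaps :: "('o,'m) cat \<Rightarrow> ('c,'j,'f,'o,'m) bicomod \<Rightarrow> ('c,'k,'g,'o,'m) bicomod
    \<Rightarrow> 'c \<Rightarrow> (('j \<Rightarrow> 'k) \<times> ('j \<Rightarrow> 'g \<Rightarrow> 'f)) set" where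
  "qrmaps d q r a = {(g,h).
      g \<in> PiE {j \<in> bpos q. blab q j = a} (\<lambda>_. {k \<in> bpos r. blab r k = a}) \<and>
      h \<in> extensional {j \<in> bpos q. blab q j = a} \<and>
      (\<forall>j\<in>{j \<in> bpos q. blab q j = a}.
         cmor d (bdir r (g j)) (bob r (g j)) (bact r (g j)) (bdir q j) (bob q j) (bact q j) (h j))}"

definition ihom :: "'c set \<Rightarrow> ('o,'m) cat \<Rightarrow> ('c,'j,'f,'o,'m) bicomod \<Rightarrow> ('c,'k,'g,'o,'m) bicomod
    \<Rightarrow> ('c, 'c \<times> (('j \<Rightarrow> 'k) \<times> ('j \<Rightarrow> 'g \<Rightarrow> 'f)), 'j \<times> 'g, 'o, 'm) bicomod" where
  "ihom C d q r = \<lparr> bpos = {(a,\<phi>). a \<in> C \<and> \<phi> \<in> qrmaps d q r a},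
     blab = fst,
     bdir = (\<lambda>(a,(g,h)). {(j,y). j \<in> bpos q \<and> blab q j = a \<and> y \<in> bdir r (g j)}),
     bob = (\<lambda>(a,(g,h)) (j,y). bob r (g j) y),
     bact = (\<lambda>(a,(g,h)) f (j,y). (j, bact r (g j) f y)) \<rparr>"

definition ihom_map :: "'c set \<Rightarrow> ('o,'m) cat
    \<Rightarrow> ('c,'j,'f,'o,'m) bicomod \<Rightarrow> ('c,'k,'g,'o,'m) bicomod
    \<Rightarrow> ('c,'j2,'f2,'o,'m) bicomod \<Rightarrow> ('c,'k2,'g2,'o,'m) bicomod
    \<Rightarrow> ('j2 \<Rightarrow> 'j) \<times> ('j2 \<Rightarrow> 'f \<Rightarrow> 'f2) \<Rightarrow> ('k \<Rightarrow> 'k2) \<times> ('k \<Rightarrow> 'g2 \<Rightarrow> 'g)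
    \<Rightarrow> ('c \<times> (('j \<Rightarrow> 'k) \<times> ('j \<Rightarrow> 'g \<Rightarrow> 'f)) \<Rightarrow> 'c \<times> (('j2 \<Rightarrow> 'k2) \<times> ('j2 \<Rightarrow> 'g2 \<Rightarrow> 'f2)))
       \<times> ('c \<times> (('j \<Rightarrow> 'k) \<times> ('j \<Rightarrow> 'g \<Rightarrow> 'f)) \<Rightarrow> 'j2 \<times> 'g2 \<Rightarrow> 'j \<times> 'g)" where
  "ihom_map C d q r q' r' A B =
     (let P = (\<lambda>(a,(g,h)).
                (a, (\<lambda>j\<in>{j \<in> bpos q'. blab q' j = a}. fst B (g (fst A j)),
                     \<lambda>j\<in>{j \<in> bpos q'. blab q' j = a}.
                        \<lambda>y\<in>bdir r' (fst B (g (fst A j))).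
                          snd A j (h (fst A j) (snd B (g (fst A j)) y)))))
      in (restrict P (bpos (ihom C d q r)),
          restrict (\<lambda>(a,(g,h)). restrict (\<lambda>(j,y). (fst A j, snd B (g (fst A j)) y))
                                         (bdir (ihom C d q' r') (P (a,(g,h)))))
                   (bpos (ihom C d q r))))"

definition curry_map :: "'c set \<Rightarrow> ('o,'m) cat
    \<Rightarrow> ('c,'i,'e,'o,'m) bicomod \<Rightarrow> ('c,'j,'f,'o,'m) bicomod \<Rightarrow> ('c,'k,'g,'o,'m) bicomod
    \<Rightarrow> ('i \<times> 'j \<Rightarrow> 'k) \<times> ('i \<times> 'j \<Rightarrow> 'g \<Rightarrow> 'e \<times> 'f)
    \<Rightarrow> ('i \<Rightarrow> 'c \<times> (('j \<Rightarrow> 'k) \<times> ('j \<Rightarrow> 'g \<Rightarrow> 'f))) \<times> ('i \<Rightarrow> 'j \<times> 'g \<Rightarrow> 'e)" where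
  "curry_map C d p q r F =
     (\<lambda>i\<in>bpos p. (blab p i,
         (\<lambda>j\<in>{j \<in> bpos q. blab q j = blab p i}. fst F (i,j),
          \<lambda>j\<in>{j \<in> bpos q. blab q j = blab p i}. \<lambda>y\<in>bdir r (fst F (i,j)). snd (snd F (i,j) y))),
      \<lambda>i\<in>bpos p. restrict (\<lambda>(j,y). fst (snd F (i,j) y))
                   {(j,y). j \<in> bpos q \<and> blab q j = blab p i \<and> y \<in> bdir r (fst F (i,j))})"

end

theory Submission
  imports Defs
begin

text \<open>A bicomodule map p \<otimes> q \<rightarrow> r sends each pair (i,j) of positions with equal labels to a
  position k of r, together with a copresheaf map from r[k] into the fibre product of p[i] and q[j]
  over d(1), that is, a pair of maps into p[i] and into q[j].  For fixed i the q-halves, collected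
  over all j, form a position of [q,r]: a map from the summand q_a to the summand r_a.  The p-halves
  assemble into a single map into p[i] out of the coproduct of the r[\<phi>(j)].  These two universal
  properties make currying a bijection, inverse to uncurry_map.  The functor laws of [q,r] and the
  naturality of currying are checked pointwise: bicomodule maps are extensional, hence determined by
  their values on positions and directions.\<close>

lemma cmorD:
  assumes "cmor d X oX aX Y oY aY h"
  shows "\<And>x. x \<in> X \<Longrightarrow> h x \<in> Y" "\<And>x. x \<notin> X \<Longrightarrow> h x = undefined"
  using assms unfolding cmor_def by (auto simp: PiE_def extensional_def)

lemma cmor_id:
  "copresheaf d X oX aX \<Longrightarrow> cmor d X oX aX X oX aX (\<lambda>x\<in>X. x)"
  unfolding cmor_def copresheaf_def by auto

lemma cmor_comp:
  assumes "cmor d X oX aX Y oY aY h1" "cmor d Y oY aY Z oZ aZ h2" "copresheaf d X oX aX"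
  shows "cmor d X oX aX Z oZ aZ (\<lambda>x\<in>X. h2 (h1 x))"
  using assms unfolding cmor_def copresheaf_def by (auto simp: PiE_def Pi_def)

lemma cmor_restrict: "cmor d X oX aX Y oY aY h \<Longrightarrow> restrict h X = h"
  unfolding cmor_def by (simp add: PiE_def extensional_restrict)

lemma cmor_pullback_iff:
  assumes "copresheaf d Z oZ aZ"
  shows "cmor d Z oZ aZ {(x,y). x \<in> X \<and> y \<in> Y \<and> oX x = oY y} (\<lambda>(x,y). oX x)
           (\<lambda>f (x,y). (aX f x, aY f y)) k \<longleftrightarrow>
         k \<in> extensional Z \<and> cmor d Z oZ aZ X oX aX (\<lambda>z\<in>Z. fst (k z)) \<and>
         cmor d Z oZ aZ Y oY aY (\<lambda>z\<in>Z. snd (k z))"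
  using assms unfolding cmor_def copresheaf_def
  by (auto simp: PiE_def Pi_def case_prod_beta) (metis prod.collapse)+

lemma cmor_pullback_map:
  assumes "copresheaf d X oX aX" "copresheaf d Y oY aY"
    "cmor d X oX aX X' oX' aX' u" "cmor d Y oY aY Y' oY' aY' v"
  shows "cmor d {(x,y). x \<in> X \<and> y \<in> Y \<and> oX x = oY y} (\<lambda>(x,y). oX x) (\<lambda>f (x,y). (aX f x, aY f y))
      {(x,y). x \<in> X' \<and> y \<in> Y' \<and> oX' x = oY' y} (\<lambda>(x,y). oX' x) (\<lambda>f (x,y). (aX' f x, aY' f y))
      (\<lambda>(x,y)\<in>{(x,y). x \<in> X \<and> y \<in> Y \<and> oX x = oY y}. (u x, v y))"
  using assms unfolding cmor_def copresheaf_def by (auto simp: PiE_def Pi_def)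

lemma cmor_Sigma_iff:
  assumes "\<And>j. j \<in> J \<Longrightarrow> copresheaf d (Y j) (oY j) (aY j)"
  shows "cmor d (Sigma J Y) (\<lambda>(j,y). oY j y) (\<lambda>f (j,y). (j, aY j f y)) Z oZ aZ k \<longleftrightarrow>
         k \<in> extensional (Sigma J Y) \<and>
         (\<forall>j\<in>J. cmor d (Y j) (oY j) (aY j) Z oZ aZ (\<lambda>y\<in>Y j. k (j,y)))"
  using assms unfolding cmor_def copresheaf_def
  by (auto simp: PiE_def Pi_def extensional_def)

lemma cmor_Sigma_map:
  assumes "\<And>j. j \<in> J' \<Longrightarrow> copresheaf d (Y' j) (oY' j) (aY' j)"
    "\<And>j. j \<in> J' \<Longrightarrow> \<sigma> j \<in> J"
    "\<And>j. j \<in> J' \<Longrightarrow> cmor d (Y' j) (oY' j) (aY' j) (Y (\<sigma> j)) (oY (\<sigma> j)) (aY (\<sigma> j)) (k j)"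
  shows "cmor d (Sigma J' Y') (\<lambda>(j,y). oY' j y) (\<lambda>f (j,y). (j, aY' j f y))
           (Sigma J Y) (\<lambda>(j,y). oY j y) (\<lambda>f (j,y). (j, aY j f y))
           (\<lambda>(j,y)\<in>Sigma J' Y'. (\<sigma> j, k j y))"
  using assms unfolding cmor_def copresheaf_def by (auto simp: PiE_def Pi_def)

definition summand :: "('c,'i,'e,'o,'m) bicomod \<Rightarrow> 'c \<Rightarrow> ('c,'i,'e,'o,'m) bicomod" where
  "summand m a = m\<lparr>bpos := {i \<in> bpos m. blab m i = a}\<rparr>"

lemma summand_simps [simp]:
  "bpos (summand m a) = {i \<in> bpos m. blab m i = a}"
  "blab (summand m a) = blab m" "bdir (summand m a) = bdir m"
  "bob (summand m a) = bob m" "bact (summand m a) = bact m"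
  by (simp_all add: summand_def)

lemma wf_bicomod_copresheaf:
  "wf_bicomod C d m \<Longrightarrow> i \<in> bpos m \<Longrightarrow> copresheaf d (bdir m i) (bob m i) (bact m i)"
  by (simp add: wf_bicomod_def)

lemma bhomI:
  assumes "\<And>i. i \<in> bpos m \<Longrightarrow> g i \<in> bpos n" "g \<in> extensional (bpos m)"
    "\<And>i. i \<in> bpos m \<Longrightarrow> blab n (g i) = blab m i"
    "h \<in> extensional (bpos m)"
    "\<And>i. i \<in> bpos m \<Longrightarrow>
       cmor d (bdir n (g i)) (bob n (g i)) (bact n (g i)) (bdir m i) (bob m i) (bact m i) (h i)"
  shows "(g,h) \<in> bhom d m n"
  using assms unfolding bhom_def by (auto simp: PiE_def)

lemma bhomD:
  assumes "(g,h) \<in> bhom d m n"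
  shows "\<And>i. i \<in> bpos m \<Longrightarrow> g i \<in> bpos n" "g \<in> extensional (bpos m)"
    "\<And>i. i \<in> bpos m \<Longrightarrow> blab n (g i) = blab m i"
    "h \<in> extensional (bpos m)"
    "\<And>i. i \<in> bpos m \<Longrightarrow>
       cmor d (bdir n (g i)) (bob n (g i)) (bact n (g i)) (bdir m i) (bob m i) (bact m i) (h i)"
  using assms unfolding bhom_def by (auto simp: PiE_def)

lemma bhom_pos: "F \<in> bhom d m n \<Longrightarrow> i \<in> bpos m \<Longrightarrow> fst F i \<in> bpos n"
  unfolding bhom_def by auto

lemma bhom_eqI:
  assumes "F \<in> bhom d m n" "G \<in> bhom d m n"
    "\<And>i. i \<in> bpos m \<Longrightarrow> fst F i = fst G i"
    "\<And>i x. i \<in> bpos m \<Longrightarrow> x \<in> bdir n (fst F i) \<Longrightarrow> snd F i x = snd G i x"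
  shows "F = G"
proof -
  have F: "(fst F, snd F) \<in> bhom d m n" and G: "(fst G, snd G) \<in> bhom d m n"
    using assms(1,2) by simp_all
  have "fst F = fst G"
    using bhomD(2)[OF F] bhomD(2)[OF G] assms(3) by (rule extensionalityI)
  moreover have "snd F i = snd G i" for i
  proof (cases "i \<in> bpos m")
    case True
    then show ?thesis
      using cmorD(2)[OF bhomD(5)[OF F True]] cmorD(2)[OF bhomD(5)[OF G True]] assms(3,4)
      by (metis ext)
  next
    case False
    then show ?thesis using bhomD(4)[OF F] bhomD(4)[OF G] by (simp add: extensional_def)
  qed
  ultimately show ?thesis by (simp add: prod_eq_iff fun_eq_iff)
qed

lemma qrmaps_eq_bhom: "qrmaps d q r a = bhom d (summand q a) (summand r a)"
  unfolding qrmaps_def bhom_def by (auto simp: PiE_def Pi_def)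

lemma bid_apply:
  "i \<in> bpos m \<Longrightarrow> fst (bid m) i = i"
  "i \<in> bpos m \<Longrightarrow> x \<in> bdir m i \<Longrightarrow> snd (bid m) i x = x"
  by (simp_all add: bid_def)

lemma bcomp_apply:
  "i \<in> bpos m \<Longrightarrow> fst (bcomp m k F G) i = fst G (fst F i)"
  "i \<in> bpos m \<Longrightarrow> x \<in> bdir k (fst G (fst F i)) \<Longrightarrow> snd (bcomp m k F G) i x = snd F i (snd G (fst F i) x)"
  by (simp_all add: bcomp_def)

lemma bhom_summandD:
  assumes "(g,h) \<in> bhom d (summand q a) (summand r a)" "j \<in> bpos q" "blab q j = a"
  shows "g j \<in> bpos r" "blab r (g j) = a"
    "cmor d (bdir r (g j)) (bob r (g j)) (bact r (g j)) (bdir q j) (bob q j) (bact q j) (h j)"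
  using bhomD[OF assms(1)] assms(2,3) by auto

lemma bid_bhom:
  assumes "wf_bicomod C d m"
  shows "bid m \<in> bhom d m m"
  using assms by (auto simp: bid_def wf_bicomod_def intro!: bhomI cmor_id)

lemma bcomp_bhom:
  assumes F: "F \<in> bhom d m n" and G: "G \<in> bhom d n k" and k: "wf_bicomod C d k"
  shows "bcomp m k F G \<in> bhom d m k"
proof -
  have F': "(fst F, snd F) \<in> bhom d m n" and G': "(fst G, snd G) \<in> bhom d n k"
    using F G by simp_all
  note FD = bhomD[OF F'] and GD = bhomD[OF G']
  show ?thesis
    unfolding bcomp_def
  proof (rule bhomI)
    fix i assume i: "i \<in> bpos m"
    have "copresheaf d (bdir k (fst G (fst F i))) (bob k (fst G (fst F i))) (bact k (fst G (fst F i)))"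
      using k GD(1) FD(1) i by (auto simp: wf_bicomod_def)
    then show "cmor d (bdir k ((\<lambda>i\<in>bpos m. fst G (fst F i)) i))
        (bob k ((\<lambda>i\<in>bpos m. fst G (fst F i)) i)) (bact k ((\<lambda>i\<in>bpos m. fst G (fst F i)) i))
        (bdir m i) (bob m i) (bact m i)
        ((\<lambda>i\<in>bpos m. \<lambda>x\<in>bdir k (fst G (fst F i)). snd F i (snd G (fst F i) x)) i)"
      using i cmor_comp[OF GD(5)[OF FD(1)[OF i]] FD(5)[OF i]] by simp
  qed (use FD GD in auto)
qed

lemma tensor_simps [simp]:
  "bpos (tensor p q) = {(i,j). i \<in> bpos p \<and> j \<in> bpos q \<and> blab p i = blab q j}"
  "blab (tensor p q) (i,j) = blab p i"
  "bdir (tensor p q) (i,j) = {(x,y). x \<in> bdir p i \<and> y \<in> bdir q j \<and> bob p i x = bob q j y}"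
  "bob (tensor p q) (i,j) = (\<lambda>(x,y). bob p i x)"
  "bact (tensor p q) (i,j) = (\<lambda>f (x,y). (bact p i f x, bact q j f y))"
  by (simp_all add: tensor_def)

lemma ihom_simps [simp]:
  "(a,\<phi>) \<in> bpos (ihom C d q r) \<longleftrightarrow> a \<in> C \<and> \<phi> \<in> bhom d (summand q a) (summand r a)"
  "blab (ihom C d q r) (a,\<phi>) = a"
  "bdir (ihom C d q r) (a,(g,h)) = Sigma {j \<in> bpos q. blab q j = a} (\<lambda>j. bdir r (g j))"
  "bob (ihom C d q r) (a,(g,h)) = (\<lambda>(j,y). bob r (g j) y)"
  "bact (ihom C d q r) (a,(g,h)) = (\<lambda>f (j,y). (j, bact r (g j) f y))"
  by (auto simp: ihom_def qrmaps_eq_bhom)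

lemma wf_tensor:
  assumes "wf_bicomod C d p" "wf_bicomod C d q"
  shows "wf_bicomod C d (tensor p q)"
  using assms unfolding wf_bicomod_def tensor_def copresheaf_def
  by (auto simp: image_subset_iff) (metis+)

lemma wf_ihom:
  assumes "wf_bicomod C d r"
  shows "wf_bicomod C d (ihom C d q r)"
  using assms unfolding wf_bicomod_def ihom_def copresheaf_def qrmaps_def
  by (auto simp: image_subset_iff PiE_def Pi_def)

lemma ihom_map_at:
  assumes r': "wf_bicomod C d r'"
    and A: "A \<in> bhom d q' q" and B: "B \<in> bhom d r r'" and x: "(a,(g,h)) \<in> bpos (ihom C d q r)"
  obtains g' h' where
    "fst (ihom_map C d q r q' r' A B) (a,(g,h)) = (a,(g',h'))"
    "(a,(g',h')) \<in> bpos (ihom C d q' r')"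
    "\<And>j. j \<in> bpos q' \<Longrightarrow> blab q' j = a \<Longrightarrow> g' j = fst B (g (fst A j))"
    "\<And>j y. j \<in> bpos q' \<Longrightarrow> blab q' j = a \<Longrightarrow> y \<in> bdir r' (g' j) \<Longrightarrow>
       h' j y = snd A j (h (fst A j) (snd B (g (fst A j)) y))"
    "snd (ihom_map C d q r q' r' A B) (a,(g,h)) =
       (\<lambda>(j,y)\<in>Sigma {j \<in> bpos q'. blab q' j = a} (\<lambda>j. bdir r' (g' j)).
          (fst A j, snd B (g (fst A j)) y))"
proof -
  obtain a1 a2 b1 b2 where AB: "A = (a1,a2)" "B = (b1,b2)" by fastforce
  note AD = bhomD[OF A[unfolded AB(1)]] and BD = bhomD[OF B[unfolded AB(2)]]
  have a: "a \<in> C" and gh: "(g,h) \<in> bhom d (summand q a) (summand r a)"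
    using x by simp_all
  note GD = bhom_summandD[OF gh]
  have j: "a1 j \<in> bpos q" "blab q (a1 j) = a" "g (a1 j) \<in> bpos r" "b1 (g (a1 j)) \<in> bpos r'"
    "blab r' (b1 (g (a1 j))) = a"
    if "j \<in> bpos q'" "blab q' j = a" for j
    using that AD(1,3) GD(1,2) BD(1,3) by auto
  define g' where "g' = (\<lambda>j\<in>{j \<in> bpos q'. blab q' j = a}. b1 (g (a1 j)))"
  define h' where "h' = (\<lambda>j\<in>{j \<in> bpos q'. blab q' j = a}. \<lambda>y\<in>bdir r' (b1 (g (a1 j))).
    a2 j (h (a1 j) (b2 (g (a1 j)) y)))"
  have "cmor d (bdir r' (b1 (g (a1 j)))) (bob r' (b1 (g (a1 j)))) (bact r' (b1 (g (a1 j))))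
      (bdir q' j) (bob q' j) (bact q' j)
      (\<lambda>y\<in>bdir r' (b1 (g (a1 j))). a2 j (h (a1 j) (b2 (g (a1 j)) y)))"
    if j': "j \<in> bpos q'" "blab q' j = a" for j
  proof -
    note jj = j[OF j']
    have "cmor d (bdir r' (b1 (g (a1 j)))) (bob r' (b1 (g (a1 j)))) (bact r' (b1 (g (a1 j))))
        (bdir q (a1 j)) (bob q (a1 j)) (bact q (a1 j))
        (\<lambda>y\<in>bdir r' (b1 (g (a1 j))). h (a1 j) (b2 (g (a1 j)) y))"
      using cmor_comp[OF BD(5)[OF jj(3)] GD(3)[OF jj(1,2)] wf_bicomod_copresheaf[OF r' jj(4)]] .
    from cmor_comp[OF this AD(5)[OF j'(1)] wf_bicomod_copresheaf[OF r' jj(4)]]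
    show ?thesis by (simp cong: restrict_cong)
  qed
  then have "(g',h') \<in> bhom d (summand q' a) (summand r' a)"
    unfolding g'_def h'_def by (intro bhomI) (auto simp: j)
  then show ?thesis
    by (intro that[of g' h']) (use x a in \<open>auto simp: ihom_map_def Let_def AB g'_def h'_def\<close>)
qed

lemma ihom_map_bhom:
  assumes r: "wf_bicomod C d r" "wf_bicomod C d r'"
    and A: "A \<in> bhom d q' q" and B: "B \<in> bhom d r r'"
  shows "ihom_map C d q r q' r' A B \<in> bhom d (ihom C d q r) (ihom C d q' r')"
proof -
  have "fst (ihom_map C d q r q' r' A B) (a,(g,h)) \<in> bpos (ihom C d q' r') \<and>
      cmor d (bdir (ihom C d q' r') (fst (ihom_map C d q r q' r' A B) (a,(g,h))))
        (bob (ihom C d q' r') (fst (ihom_map C d q r q' r' A B) (a,(g,h))))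
        (bact (ihom C d q' r') (fst (ihom_map C d q r q' r' A B) (a,(g,h))))
        (bdir (ihom C d q r) (a,(g,h))) (bob (ihom C d q r) (a,(g,h))) (bact (ihom C d q r) (a,(g,h)))
        (snd (ihom_map C d q r q' r' A B) (a,(g,h)))"
    if x: "(a,(g,h)) \<in> bpos (ihom C d q r)" for a g h
  proof -
    obtain g' h' where M: "fst (ihom_map C d q r q' r' A B) (a,(g,h)) = (a,(g',h'))"
      "(a,(g',h')) \<in> bpos (ihom C d q' r')"
      "\<And>j. j \<in> bpos q' \<Longrightarrow> blab q' j = a \<Longrightarrow> g' j = fst B (g (fst A j))"
      "\<And>j y. j \<in> bpos q' \<Longrightarrow> blab q' j = a \<Longrightarrow> y \<in> bdir r' (g' j) \<Longrightarrow>
         h' j y = snd A j (h (fst A j) (snd B (g (fst A j)) y))"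
      "snd (ihom_map C d q r q' r' A B) (a,(g,h)) =
         (\<lambda>(j,y)\<in>Sigma {j \<in> bpos q'. blab q' j = a} (\<lambda>j. bdir r' (g' j)).
            (fst A j, snd B (g (fst A j)) y))"
      using ihom_map_at[OF r(2) A B x] by blast
    have gh: "(g,h) \<in> bhom d (summand q a) (summand r a)" using x by simp
    have A': "(fst A, snd A) \<in> bhom d q' q" and B': "(fst B, snd B) \<in> bhom d r r'"
      using A B by simp_all
    have j: "fst A j \<in> bpos q" "blab q (fst A j) = a" "g (fst A j) \<in> bpos r" "g' j \<in> bpos r'"
      if "j \<in> bpos q'" "blab q' j = a" for j
      using that bhomD[OF A'] bhom_summandD[OF gh] bhomD(1)[OF B'] M(3) by auto
    have "cmor d (bdir r' (g' j)) (bob r' (g' j)) (bact r' (g' j))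
        (bdir r (g (fst A j))) (bob r (g (fst A j))) (bact r (g (fst A j))) (snd B (g (fst A j)))"
      if "j \<in> bpos q'" "blab q' j = a" for j
      using bhomD(5)[OF B' j(3)[OF that]] M(3)[OF that] by simp
    with M(2) show ?thesis
      unfolding M(1,5) ihom_simps
      by (auto intro!: cmor_Sigma_map wf_bicomod_copresheaf[OF r(2)] simp: j)
  qed
  then show ?thesis
    by (auto simp: ihom_map_def Let_def intro!: bhomI)
qed

lemma ihom_map_id:
  assumes q: "wf_bicomod C d q" and r: "wf_bicomod C d r"
  shows "ihom_map C d q r q r (bid q) (bid r) = bid (ihom C d q r)"
proof (rule bhom_eqI)
  show "ihom_map C d q r q r (bid q) (bid r) \<in> bhom d (ihom C d q r) (ihom C d q r)"
    by (rule ihom_map_bhom[OF r r bid_bhom[OF q] bid_bhom[OF r]])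
  show "bid (ihom C d q r) \<in> bhom d (ihom C d q r) (ihom C d q r)"
    by (rule bid_bhom[OF wf_ihom[OF r]])
  fix x assume x: "x \<in> bpos (ihom C d q r)"
  then obtain a g h where xe: "x = (a,(g,h))" by (metis prod.collapse)
  obtain g' h' where M: "fst (ihom_map C d q r q r (bid q) (bid r)) x = (a,(g',h'))"
      "(a,(g',h')) \<in> bpos (ihom C d q r)"
      "\<And>j. j \<in> bpos q \<Longrightarrow> blab q j = a \<Longrightarrow> g' j = fst (bid r) (g (fst (bid q) j))"
      "\<And>j y. j \<in> bpos q \<Longrightarrow> blab q j = a \<Longrightarrow> y \<in> bdir r (g' j) \<Longrightarrow>
         h' j y = snd (bid q) j (h (fst (bid q) j) (snd (bid r) (g (fst (bid q) j)) y))"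
      "snd (ihom_map C d q r q r (bid q) (bid r)) x =
         (\<lambda>(j,y)\<in>Sigma {j \<in> bpos q. blab q j = a} (\<lambda>j. bdir r (g' j)).
            (fst (bid q) j, snd (bid r) (g (fst (bid q) j)) y))"
    using ihom_map_at[OF r bid_bhom[OF q] bid_bhom[OF r] x[unfolded xe]] unfolding xe by blast
  have gh: "(g,h) \<in> bhom d (summand q a) (summand r a)" using x by (simp add: xe)
  note G = bhom_summandD[OF gh]
  have g': "g' j = g j" if "j \<in> bpos q" "blab q j = a" for j
    using M(3)[OF that] that G(1)[OF that] by (simp add: bid_apply)
  have h': "h' j y = h j y" if "j \<in> bpos q" "blab q j = a" "y \<in> bdir r (g j)" for j y
    using M(4)[OF that(1,2)] cmorD(1)[OF G(3)[OF that(1,2)] that(3)] that G(1)[OF that(1,2)]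
    by (simp add: g' bid_apply)
  have "(g',h') = (g,h)"
    by (rule bhom_eqI) (use M(2) gh g' h' in auto)
  then show "fst (ihom_map C d q r q r (bid q) (bid r)) x = fst (bid (ihom C d q r)) x"
    using M(1) x by (simp add: xe bid_apply)
  fix z assume "z \<in> bdir (ihom C d q r) (fst (ihom_map C d q r q r (bid q) (bid r)) x)"
  then show "snd (ihom_map C d q r q r (bid q) (bid r)) x z = snd (bid (ihom C d q r)) x z"
    using M(1,5) x g' G(1) by (auto simp: xe bid_apply)
qed

lemma ihom_map_comp:
  assumes wf: "wf_bicomod C d q" "wf_bicomod C d r" "wf_bicomod C d r'" "wf_bicomod C d r''"
    and A: "A \<in> bhom d q' q" and A': "A' \<in> bhom d q'' q'"
    and B: "B \<in> bhom d r r'" and B': "B' \<in> bhom d r' r''"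
  shows "ihom_map C d q r q'' r'' (bcomp q'' q A' A) (bcomp r r'' B B')
          = bcomp (ihom C d q r) (ihom C d q'' r'')
              (ihom_map C d q r q' r' A B) (ihom_map C d q' r' q'' r'' A' B')"
    (is "?L = bcomp _ _ ?F ?G")
proof (rule bhom_eqI)
  have AA: "bcomp q'' q A' A \<in> bhom d q'' q" and BB: "bcomp r r'' B B' \<in> bhom d r r''"
    by (rule bcomp_bhom[OF A' A wf(1)], rule bcomp_bhom[OF B B' wf(4)])
  show "?L \<in> bhom d (ihom C d q r) (ihom C d q'' r'')"
    by (rule ihom_map_bhom[OF wf(2,4) AA BB])
  show "bcomp (ihom C d q r) (ihom C d q'' r'') ?F ?G \<in> bhom d (ihom C d q r) (ihom C d q'' r'')"
    by (rule bcomp_bhom[OF ihom_map_bhom[OF wf(2,3) A B] ihom_map_bhom[OF wf(3,4) A' B'] wf_ihom[OF wf(4)]])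
  fix x assume x: "x \<in> bpos (ihom C d q r)"
  then obtain a g h where xe: "x = (a,(g,h))" by (metis prod.collapse)
  obtain a1 a2 b1 b2 c1 c2 e1 e2 where
    pairs [simp]: "A = (a1,a2)" "B = (b1,b2)" "A' = (c1,c2)" "B' = (e1,e2)"
    by fastforce
  note AD = bhomD[OF A[unfolded pairs]] and BD = bhomD[OF B[unfolded pairs]]
    and CD = bhomD[OF A'[unfolded pairs]] and ED = bhomD[OF B'[unfolded pairs]]
  have gh: "(g,h) \<in> bhom d (summand q a) (summand r a)" using x by (simp add: xe)
  note G = bhom_summandD[OF gh]
  obtain g1 h1 where F: "fst ?F x = (a,(g1,h1))" "(a,(g1,h1)) \<in> bpos (ihom C d q' r')"
      "\<And>j. j \<in> bpos q' \<Longrightarrow> blab q' j = a \<Longrightarrow> g1 j = b1 (g (a1 j))"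
      "\<And>j y. j \<in> bpos q' \<Longrightarrow> blab q' j = a \<Longrightarrow> y \<in> bdir r' (g1 j) \<Longrightarrow>
         h1 j y = a2 j (h (a1 j) (b2 (g (a1 j)) y))"
      "snd ?F x = (\<lambda>(j,y)\<in>Sigma {j \<in> bpos q'. blab q' j = a} (\<lambda>j. bdir r' (g1 j)).
            (a1 j, b2 (g (a1 j)) y))"
    using ihom_map_at[OF wf(3) A B x[unfolded xe]] unfolding xe by auto
  obtain g2 h2 where FG: "fst ?G (a,(g1,h1)) = (a,(g2,h2))" "(a,(g2,h2)) \<in> bpos (ihom C d q'' r'')"
      "\<And>j. j \<in> bpos q'' \<Longrightarrow> blab q'' j = a \<Longrightarrow> g2 j = e1 (g1 (c1 j))"
      "\<And>j y. j \<in> bpos q'' \<Longrightarrow> blab q'' j = a \<Longrightarrow> y \<in> bdir r'' (g2 j) \<Longrightarrow>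
         h2 j y = c2 j (h1 (c1 j) (e2 (g1 (c1 j)) y))"
      "snd ?G (a,(g1,h1)) = (\<lambda>(j,y)\<in>Sigma {j \<in> bpos q''. blab q'' j = a} (\<lambda>j. bdir r'' (g2 j)).
            (c1 j, e2 (g1 (c1 j)) y))"
    using ihom_map_at[OF wf(4) A' B' F(2)] by auto
  obtain g3 h3 where L: "fst ?L x = (a,(g3,h3))" "(a,(g3,h3)) \<in> bpos (ihom C d q'' r'')"
      "\<And>j. j \<in> bpos q'' \<Longrightarrow> blab q'' j = a \<Longrightarrow>
         g3 j = fst (bcomp r r'' B B') (g (fst (bcomp q'' q A' A) j))"
      "\<And>j y. j \<in> bpos q'' \<Longrightarrow> blab q'' j = a \<Longrightarrow> y \<in> bdir r'' (g3 j) \<Longrightarrow>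
         h3 j y = snd (bcomp q'' q A' A) j (h (fst (bcomp q'' q A' A) j)
           (snd (bcomp r r'' B B') (g (fst (bcomp q'' q A' A) j)) y))"
      "snd ?L x = (\<lambda>(j,y)\<in>Sigma {j \<in> bpos q''. blab q'' j = a} (\<lambda>j. bdir r'' (g3 j)).
            (fst (bcomp q'' q A' A) j, snd (bcomp r r'' B B') (g (fst (bcomp q'' q A' A) j)) y))"
    using ihom_map_at[OF wf(4) AA BB x[unfolded xe]] unfolding xe by blast
  have j: "c1 j \<in> bpos q'" "blab q' (c1 j) = a" "a1 (c1 j) \<in> bpos q" "blab q (a1 (c1 j)) = a"
    "g (a1 (c1 j)) \<in> bpos r" "b1 (g (a1 (c1 j))) \<in> bpos r'"
    "g1 (c1 j) = b1 (g (a1 (c1 j)))" "g2 j = e1 (b1 (g (a1 (c1 j))))" "g3 j = e1 (b1 (g (a1 (c1 j))))"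
    if "j \<in> bpos q''" "blab q'' j = a" for j
    using that CD(1,3) AD(1,3) G(1) BD(1) F(3) FG(3) L(3) by (auto simp: bcomp_apply)
  have y: "e2 (b1 (g (a1 (c1 j)))) y \<in> bdir r' (b1 (g (a1 (c1 j))))"
    "b2 (g (a1 (c1 j))) (e2 (b1 (g (a1 (c1 j)))) y) \<in> bdir r (g (a1 (c1 j)))"
    "h (a1 (c1 j)) (b2 (g (a1 (c1 j))) (e2 (b1 (g (a1 (c1 j)))) y)) \<in> bdir q (a1 (c1 j))"
    if "j \<in> bpos q''" "blab q'' j = a" "y \<in> bdir r'' (e1 (b1 (g (a1 (c1 j)))))" for j y
  proof -
    note jj = j[OF that(1,2)]
    show y1: "e2 (b1 (g (a1 (c1 j)))) y \<in> bdir r' (b1 (g (a1 (c1 j))))"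
      using cmorD(1)[OF ED(5)[OF jj(6)] that(3)] .
    show y2: "b2 (g (a1 (c1 j))) (e2 (b1 (g (a1 (c1 j)))) y) \<in> bdir r (g (a1 (c1 j)))"
      using cmorD(1)[OF BD(5)[OF jj(5)] y1] .
    show "h (a1 (c1 j)) (b2 (g (a1 (c1 j))) (e2 (b1 (g (a1 (c1 j)))) y)) \<in> bdir q (a1 (c1 j))"
      using cmorD(1)[OF G(3)[OF jj(3,4)] y2] .
  qed
  have "(g3,h3) = (g2,h2)"
  proof (rule bhom_eqI)
    show "(g3,h3) \<in> bhom d (summand q'' a) (summand r'' a)"
      "(g2,h2) \<in> bhom d (summand q'' a) (summand r'' a)"
      using L(2) FG(2) by simp_all
    fix i assume "i \<in> bpos (summand q'' a)"
    then have i: "i \<in> bpos q''" "blab q'' i = a" by simp_all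
    note ji = j[OF i]
    show "fst (g3,h3) i = fst (g2,h2) i" using ji by simp
    fix y assume "y \<in> bdir (summand r'' a) (fst (g3,h3) i)"
    then have yi: "y \<in> bdir r'' (e1 (b1 (g (a1 (c1 i)))))" using ji by simp
    note yy = y[OF i yi]
    have "h3 i y = c2 i (a2 (c1 i) (h (a1 (c1 i)) (b2 (g (a1 (c1 i))) (e2 (b1 (g (a1 (c1 i)))) y))))"
      using L(4)[OF i] i ji yi yy by (simp add: bcomp_apply)
    moreover have "h2 i y = c2 i (a2 (c1 i) (h (a1 (c1 i)) (b2 (g (a1 (c1 i))) (e2 (b1 (g (a1 (c1 i)))) y))))"
      using FG(4)[OF i] F(4)[OF ji(1,2)] ji yi yy by simp
    ultimately show "snd (g3,h3) i y = snd (g2,h2) i y" by simp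
  qed
  then show "fst ?L x = fst (bcomp (ihom C d q r) (ihom C d q'' r'') ?F ?G) x"
    using x L(1) F(1) FG(1) by (simp add: bcomp_apply)
  fix z assume "z \<in> bdir (ihom C d q'' r'') (fst ?L x)"
  then obtain j y where z: "z = (j,y)" "j \<in> bpos q''" "blab q'' j = a" "y \<in> bdir r'' (g3 j)"
    using L(1) by auto
  note jz = j[OF z(2,3)] and yz = y[OF z(2,3)]
  have "snd ?L x z = (a1 (c1 j), b2 (g (a1 (c1 j))) (e2 (b1 (g (a1 (c1 j)))) y))"
    using L(5) z jz by (simp add: bcomp_apply)
  moreover have "snd ?G (a,(g1,h1)) z = (c1 j, e2 (b1 (g (a1 (c1 j)))) y)"
    using FG(5) z jz by simp
  moreover have "snd ?F x (c1 j, e2 (b1 (g (a1 (c1 j)))) y) =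
      (a1 (c1 j), b2 (g (a1 (c1 j))) (e2 (b1 (g (a1 (c1 j)))) y))"
    using F(5) z jz yz by simp
  ultimately show "snd ?L x z = snd (bcomp (ihom C d q r) (ihom C d q'' r'') ?F ?G) x z"
    using x F(1) FG(1) z jz by (simp add: bcomp_apply)
qed

lemma curry_map_at:
  assumes "i \<in> bpos p"
  obtains g h where
    "fst (curry_map C d p q r F) i = (blab p i, (g,h))"
    "g = (\<lambda>j\<in>{j \<in> bpos q. blab q j = blab p i}. fst F (i,j))"
    "h = (\<lambda>j\<in>{j \<in> bpos q. blab q j = blab p i}. \<lambda>y\<in>bdir r (fst F (i,j)). snd (snd F (i,j) y))"
    "snd (curry_map C d p q r F) i =
       (\<lambda>(j,y)\<in>Sigma {j \<in> bpos q. blab q j = blab p i} (\<lambda>j. bdir r (g j)). fst (snd F (i,j) y))"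
proof -
  have "{(j,y). j \<in> bpos q \<and> blab q j = blab p i \<and> y \<in> bdir r (fst F (i,j))} =
      Sigma {j \<in> bpos q. blab q j = blab p i}
        (\<lambda>j. bdir r ((\<lambda>j\<in>{j \<in> bpos q. blab q j = blab p i}. fst F (i,j)) j))"
    by auto
  then show ?thesis
    using assms by (intro that[OF _ refl refl]) (simp_all add: curry_map_def)
qed

lemma curry_map_bhom:
  assumes p: "wf_bicomod C d p" and r: "wf_bicomod C d r" and F: "F \<in> bhom d (tensor p q) r"
  shows "curry_map C d p q r F \<in> bhom d p (ihom C d q r)"
proof -
  have F': "(fst F, snd F) \<in> bhom d (tensor p q) r" using F by simp
  have Fij: "fst F (i,j) \<in> bpos r" "blab r (fst F (i,j)) = blab p i"
    "copresheaf d (bdir r (fst F (i,j))) (bob r (fst F (i,j))) (bact r (fst F (i,j)))"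
    "cmor d (bdir r (fst F (i,j))) (bob r (fst F (i,j))) (bact r (fst F (i,j)))
       (bdir p i) (bob p i) (bact p i) (\<lambda>y\<in>bdir r (fst F (i,j)). fst (snd F (i,j) y))"
    "cmor d (bdir r (fst F (i,j))) (bob r (fst F (i,j))) (bact r (fst F (i,j)))
       (bdir q j) (bob q j) (bact q j) (\<lambda>y\<in>bdir r (fst F (i,j)). snd (snd F (i,j) y))"
    if "i \<in> bpos p" "j \<in> bpos q" "blab q j = blab p i" for i j
  proof -
    have ij: "(i,j) \<in> bpos (tensor p q)" using that by simp
    show F1: "fst F (i,j) \<in> bpos r" "blab r (fst F (i,j)) = blab p i"
      using bhomD(1,3)[OF F' ij] by simp_all
    show cp: "copresheaf d (bdir r (fst F (i,j))) (bob r (fst F (i,j))) (bact r (fst F (i,j)))"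
      by (rule wf_bicomod_copresheaf[OF r F1(1)])
    show "cmor d (bdir r (fst F (i,j))) (bob r (fst F (i,j))) (bact r (fst F (i,j)))
       (bdir p i) (bob p i) (bact p i) (\<lambda>y\<in>bdir r (fst F (i,j)). fst (snd F (i,j) y))"
      "cmor d (bdir r (fst F (i,j))) (bob r (fst F (i,j))) (bact r (fst F (i,j)))
       (bdir q j) (bob q j) (bact q j) (\<lambda>y\<in>bdir r (fst F (i,j)). snd (snd F (i,j) y))"
      using bhomD(5)[OF F' ij] by (simp_all add: cmor_pullback_iff[OF cp])
  qed
  have "fst (curry_map C d p q r F) i \<in> bpos (ihom C d q r) \<and>
      cmor d (bdir (ihom C d q r) (fst (curry_map C d p q r F) i))
        (bob (ihom C d q r) (fst (curry_map C d p q r F) i))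
        (bact (ihom C d q r) (fst (curry_map C d p q r F) i))
        (bdir p i) (bob p i) (bact p i) (snd (curry_map C d p q r F) i)"
    if i: "i \<in> bpos p" for i
  proof -
    obtain g h where c: "fst (curry_map C d p q r F) i = (blab p i, (g,h))"
      "g = (\<lambda>j\<in>{j \<in> bpos q. blab q j = blab p i}. fst F (i,j))"
      "h = (\<lambda>j\<in>{j \<in> bpos q. blab q j = blab p i}. \<lambda>y\<in>bdir r (fst F (i,j)). snd (snd F (i,j) y))"
      "snd (curry_map C d p q r F) i =
         (\<lambda>(j,y)\<in>Sigma {j \<in> bpos q. blab q j = blab p i} (\<lambda>j. bdir r (g j)). fst (snd F (i,j) y))"
      by (rule curry_map_at[OF i])
    have "(g,h) \<in> bhom d (summand q (blab p i)) (summand r (blab p i))"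
      unfolding c(2,3) by (rule bhomI) (auto simp: i Fij)
    moreover have "blab p i \<in> C" using p i by (auto simp: wf_bicomod_def)
    moreover have "cmor d (Sigma {j \<in> bpos q. blab q j = blab p i} (\<lambda>j. bdir r (g j)))
        (\<lambda>(j,y). bob r (g j) y) (\<lambda>f (j,y). (j, bact r (g j) f y))
        (bdir p i) (bob p i) (bact p i) (snd (curry_map C d p q r F) i)"
      by (subst cmor_Sigma_iff) (auto simp: c(2,4) i Fij cong: restrict_cong)
    ultimately show ?thesis by (simp add: c(1))
  qed
  then show ?thesis
    by (auto simp: curry_map_def intro!: bhomI)
qed

lemma bhom_into_ihomE:
  assumes "G \<in> bhom d p (ihom C d q r)" "i \<in> bpos p"
  obtains g h where "fst G i = (blab p i, (g,h))"
    "(g,h) \<in> bhom d (summand q (blab p i)) (summand r (blab p i))"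
    "cmor d (Sigma {j \<in> bpos q. blab q j = blab p i} (\<lambda>j. bdir r (g j)))
       (\<lambda>(j,y). bob r (g j) y) (\<lambda>f (j,y). (j, bact r (g j) f y))
       (bdir p i) (bob p i) (bact p i) (snd G i)"
proof -
  have G: "(fst G, snd G) \<in> bhom d p (ihom C d q r)" using assms(1) by simp
  obtain a g h where Gi: "fst G i = (a,(g,h))" by (metis prod.collapse)
  then have "a = blab p i" using bhomD(3)[OF G assms(2)] by simp
  then show ?thesis
    using that Gi bhomD(1,5)[OF G assms(2)] by simp
qed

definition uncurry_map :: "('c,'i,'e,'o,'m) bicomod \<Rightarrow> ('c,'j,'f,'o,'m) bicomod
    \<Rightarrow> ('c,'k,'g,'o,'m) bicomod
    \<Rightarrow> ('i \<Rightarrow> 'c \<times> (('j \<Rightarrow> 'k) \<times> ('j \<Rightarrow> 'g \<Rightarrow> 'f))) \<times> ('i \<Rightarrow> 'j \<times> 'g \<Rightarrow> 'e)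
    \<Rightarrow> ('i \<times> 'j \<Rightarrow> 'k) \<times> ('i \<times> 'j \<Rightarrow> 'g \<Rightarrow> 'e \<times> 'f)" where
  "uncurry_map p q r G =
     (\<lambda>(i,j)\<in>bpos (tensor p q). fst (snd (fst G i)) j,
      \<lambda>(i,j)\<in>bpos (tensor p q). \<lambda>y\<in>bdir r (fst (snd (fst G i)) j).
        (snd G i (j,y), snd (snd (fst G i)) j y))"

lemma uncurry_map_bhom:
  assumes r: "wf_bicomod C d r" and G: "G \<in> bhom d p (ihom C d q r)"
  shows "uncurry_map p q r G \<in> bhom d (tensor p q) r"
proof -
  have "fst (snd (fst G i)) j \<in> bpos r \<and> blab r (fst (snd (fst G i)) j) = blab p i \<and>
      cmor d (bdir r (fst (snd (fst G i)) j)) (bob r (fst (snd (fst G i)) j))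
        (bact r (fst (snd (fst G i)) j)) (bdir (tensor p q) (i,j)) (bob (tensor p q) (i,j))
        (bact (tensor p q) (i,j)) (snd (uncurry_map p q r G) (i,j))"
    if ij: "(i,j) \<in> bpos (tensor p q)" for i j
  proof -
    have i: "i \<in> bpos p" and j: "j \<in> bpos q" "blab q j = blab p i" using ij by auto
    obtain g h where Gi: "fst G i = (blab p i, (g,h))"
        "(g,h) \<in> bhom d (summand q (blab p i)) (summand r (blab p i))"
        "cmor d (Sigma {j \<in> bpos q. blab q j = blab p i} (\<lambda>j. bdir r (g j)))
           (\<lambda>(j,y). bob r (g j) y) (\<lambda>f (j,y). (j, bact r (g j) f y))
           (bdir p i) (bob p i) (bact p i) (snd G i)"
      by (rule bhom_into_ihomE[OF G i])
    note gh = bhom_summandD[OF Gi(2)]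
    have cp: "copresheaf d (bdir r (g j)) (bob r (g j)) (bact r (g j))"
      if "j \<in> {j \<in> bpos q. blab q j = blab p i}" for j
      using wf_bicomod_copresheaf[OF r gh(1)] that by simp
    have "cmor d (bdir r (g j)) (bob r (g j)) (bact r (g j)) (bdir p i) (bob p i) (bact p i)
        (\<lambda>y\<in>bdir r (g j). snd G i (j,y))"
      using iffD1[OF cmor_Sigma_iff[OF cp] Gi(3)] j by simp
    then have "cmor d (bdir r (g j)) (bob r (g j)) (bact r (g j)) (bdir (tensor p q) (i,j))
        (bob (tensor p q) (i,j)) (bact (tensor p q) (i,j))
        (\<lambda>y\<in>bdir r (g j). (snd G i (j,y), h j y))"
      using gh(3)[OF j] by (simp add: cmor_pullback_iff[OF cp] j cmor_restrict cong: restrict_cong)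
    then show ?thesis
      using ij gh(1,2)[OF j] by (simp add: uncurry_map_def Gi(1))
  qed
  then show ?thesis
    by (auto simp: uncurry_map_def intro!: bhomI)
qed

lemma uncurry_curry:
  assumes p: "wf_bicomod C d p" and r: "wf_bicomod C d r" and F: "F \<in> bhom d (tensor p q) r"
  shows "uncurry_map p q r (curry_map C d p q r F) = F"
proof (rule bhom_eqI)
  show "uncurry_map p q r (curry_map C d p q r F) \<in> bhom d (tensor p q) r"
    by (rule uncurry_map_bhom[OF r curry_map_bhom[OF p r F]])
  show "F \<in> bhom d (tensor p q) r" by (rule F)
  fix ij assume ij: "ij \<in> bpos (tensor p q)"
  then obtain i j where ije: "ij = (i,j)" and i: "i \<in> bpos p" and j: "j \<in> bpos q" "blab q j = blab p i"
    by auto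
  obtain g h where c: "fst (curry_map C d p q r F) i = (blab p i, (g,h))"
      "g = (\<lambda>j\<in>{j \<in> bpos q. blab q j = blab p i}. fst F (i,j))"
      "h = (\<lambda>j\<in>{j \<in> bpos q. blab q j = blab p i}. \<lambda>y\<in>bdir r (fst F (i,j)). snd (snd F (i,j) y))"
      "snd (curry_map C d p q r F) i =
         (\<lambda>(j,y)\<in>Sigma {j \<in> bpos q. blab q j = blab p i} (\<lambda>j. bdir r (g j)). fst (snd F (i,j) y))"
    by (rule curry_map_at[OF i])
  show "fst (uncurry_map p q r (curry_map C d p q r F)) ij = fst F ij"
    using ij j by (simp add: ije uncurry_map_def c)
  fix y assume "y \<in> bdir r (fst (uncurry_map p q r (curry_map C d p q r F)) ij)"
  then show "snd (uncurry_map p q r (curry_map C d p q r F)) ij y = snd F ij y"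
    using ij j by (simp add: ije uncurry_map_def c)
qed

lemma curry_uncurry:
  assumes p: "wf_bicomod C d p" and r: "wf_bicomod C d r" and G: "G \<in> bhom d p (ihom C d q r)"
  shows "curry_map C d p q r (uncurry_map p q r G) = G"
proof (rule bhom_eqI)
  have U: "uncurry_map p q r G \<in> bhom d (tensor p q) r" by (rule uncurry_map_bhom[OF r G])
  show "curry_map C d p q r (uncurry_map p q r G) \<in> bhom d p (ihom C d q r)"
    by (rule curry_map_bhom[OF p r U])
  show "G \<in> bhom d p (ihom C d q r)" by (rule G)
  fix i assume i: "i \<in> bpos p"
  obtain g h where Gi: "fst G i = (blab p i, (g,h))"
      "(g,h) \<in> bhom d (summand q (blab p i)) (summand r (blab p i))"
    using bhom_into_ihomE[OF G i] by blast
  obtain g' h' where c: "fst (curry_map C d p q r (uncurry_map p q r G)) i = (blab p i, (g',h'))"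
      "g' = (\<lambda>j\<in>{j \<in> bpos q. blab q j = blab p i}. fst (uncurry_map p q r G) (i,j))"
      "h' = (\<lambda>j\<in>{j \<in> bpos q. blab q j = blab p i}. \<lambda>y\<in>bdir r (fst (uncurry_map p q r G) (i,j)).
              snd (snd (uncurry_map p q r G) (i,j) y))"
      "snd (curry_map C d p q r (uncurry_map p q r G)) i =
         (\<lambda>(j,y)\<in>Sigma {j \<in> bpos q. blab q j = blab p i} (\<lambda>j. bdir r (g' j)).
            fst (snd (uncurry_map p q r G) (i,j) y))"
    by (rule curry_map_at[OF i])
  have g': "g' j = g j" if "j \<in> bpos q" "blab q j = blab p i" for j
    using that i by (simp add: c(2) uncurry_map_def Gi(1))
  have "(g',h') = (g,h)"
  proof (rule bhom_eqI)
    show "(g',h') \<in> bhom d (summand q (blab p i)) (summand r (blab p i))"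
      using bhom_pos[OF curry_map_bhom[OF p r U] i] c(1) by simp
  qed (use Gi(2) g' i in \<open>auto simp: c(3) uncurry_map_def Gi(1)\<close>)
  then show "fst (curry_map C d p q r (uncurry_map p q r G)) i = fst G i"
    by (simp add: c(1) Gi(1))
  fix z assume "z \<in> bdir (ihom C d q r) (fst (curry_map C d p q r (uncurry_map p q r G)) i)"
  then obtain j y where z: "z = (j,y)" "j \<in> bpos q" "blab q j = blab p i" "y \<in> bdir r (g' j)"
    by (auto simp: c(1))
  then have "snd (curry_map C d p q r (uncurry_map p q r G)) i z = fst (snd (uncurry_map p q r G) (i,j) y)"
    by (simp add: c(4))
  also have "\<dots> = snd G i z"
    using z i g' by (simp add: uncurry_map_def Gi(1))
  finally show "snd (curry_map C d p q r (uncurry_map p q r G)) i z = snd G i z" .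
qed

lemma curry_map_bij:
  assumes p: "wf_bicomod C d p" and r: "wf_bicomod C d r"
  shows "bij_betw (curry_map C d p q r) (bhom d (tensor p q) r) (bhom d p (ihom C d q r))"
  by (rule bij_betw_byWitness[where f' = "uncurry_map p q r"])
    (auto simp: uncurry_curry[OF p r] curry_uncurry[OF p r] curry_map_bhom[OF p r] uncurry_map_bhom[OF r])

lemma tensor_map_bhom:
  assumes wf: "wf_bicomod C d p" "wf_bicomod C d q"
    and A: "A \<in> bhom d p' p" and B: "B \<in> bhom d q' q"
  shows "tensor_map p q p' q' A B \<in> bhom d (tensor p' q') (tensor p q)"
proof -
  have A': "(fst A, snd A) \<in> bhom d p' p" and B': "(fst B, snd B) \<in> bhom d q' q"
    using A B by simp_all
  note AD = bhomD[OF A'] and BD = bhomD[OF B']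
  show ?thesis
    unfolding tensor_map_def
    by (rule bhomI)
      (auto simp: AD(1,3) BD(1,3) intro!: cmor_pullback_map AD(5) BD(5)
        wf_bicomod_copresheaf[OF wf(1) AD(1)] wf_bicomod_copresheaf[OF wf(2) BD(1)])
qed

lemma bcomp_tensor_map_apply:
  assumes A: "A \<in> bhom d p' p" and B: "B \<in> bhom d q' q"
    and F: "F \<in> bhom d (tensor p q) r" and G: "G \<in> bhom d r r'"
    and ij: "(i,j) \<in> bpos (tensor p' q')"
  shows "fst (bcomp (tensor p' q') r' (bcomp (tensor p' q') r (tensor_map p q p' q' A B) F) G) (i,j)
      = fst G (fst F (fst A i, fst B j))"
    "y \<in> bdir r' (fst G (fst F (fst A i, fst B j))) \<Longrightarrow>
     snd (bcomp (tensor p' q') r' (bcomp (tensor p' q') r (tensor_map p q p' q' A B) F) G) (i,j) y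
      = map_prod (snd A i) (snd B j) (snd F (fst A i, fst B j) (snd G (fst F (fst A i, fst B j)) y))"
proof -
  have AB: "(fst A i, fst B j) \<in> bpos (tensor p q)"
    using ij bhomD(1,3)[of "fst A" "snd A" d p' p i] bhomD(1,3)[of "fst B" "snd B" d q' q j] A B
    by auto
  then show "fst (bcomp (tensor p' q') r' (bcomp (tensor p' q') r (tensor_map p q p' q' A B) F) G) (i,j)
      = fst G (fst F (fst A i, fst B j))"
    using ij by (simp add: bcomp_apply tensor_map_def)
  assume y: "y \<in> bdir r' (fst G (fst F (fst A i, fst B j)))"
  have "snd G (fst F (fst A i, fst B j)) y \<in> bdir r (fst F (fst A i, fst B j))"
    using cmorD(1)[OF bhomD(5)[of "fst G" "snd G", OF _ bhom_pos[OF F AB]] y] G by simp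
  moreover from this have "snd F (fst A i, fst B j) (snd G (fst F (fst A i, fst B j)) y)
      \<in> bdir (tensor p q) (fst A i, fst B j)"
    using cmorD(1)[OF bhomD(5)[of "fst F" "snd F", OF _ AB]] F by simp
  ultimately show "snd (bcomp (tensor p' q') r' (bcomp (tensor p' q') r (tensor_map p q p' q' A B) F) G) (i,j) y
      = map_prod (snd A i) (snd B j) (snd F (fst A i, fst B j) (snd G (fst F (fst A i, fst B j)) y))"
    using ij AB y by (auto simp: bcomp_apply tensor_map_def map_prod_def)
qed

lemma curry_map_natural:
  assumes wf: "wf_bicomod C d p" "wf_bicomod C d q" "wf_bicomod C d r"
      "wf_bicomod C d p'" "wf_bicomod C d r'"
    and A: "A \<in> bhom d p' p" and B: "B \<in> bhom d q' q" and G: "G \<in> bhom d r r'"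
    and F: "F \<in> bhom d (tensor p q) r"
  shows "curry_map C d p' q' r'
          (bcomp (tensor p' q') r' (bcomp (tensor p' q') r (tensor_map p q p' q' A B) F) G)
        = bcomp p' (ihom C d q' r')
            (bcomp p' (ihom C d q r) A (curry_map C d p q r F))
            (ihom_map C d q r q' r' B G)"
    (is "curry_map C d p' q' r' ?K = bcomp p' (ihom C d q' r') ?M ?N")
proof (rule bhom_eqI)
  have K: "?K \<in> bhom d (tensor p' q') r'"
    by (intro bcomp_bhom[OF _ G wf(5)] bcomp_bhom[OF _ F wf(3)] tensor_map_bhom[OF wf(1,2) A B])
  show "curry_map C d p' q' r' ?K \<in> bhom d p' (ihom C d q' r')"
    by (rule curry_map_bhom[OF wf(4,5) K])
  show "bcomp p' (ihom C d q' r') ?M ?N \<in> bhom d p' (ihom C d q' r')"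
    by (intro bcomp_bhom[OF _ ihom_map_bhom[OF wf(3,5) B G] wf_ihom[OF wf(5)]]
        bcomp_bhom[OF A curry_map_bhom[OF wf(1,3) F] wf_ihom[OF wf(3)]])
  fix i assume i: "i \<in> bpos p'"
  obtain a1 a2 b1 b2 e1 e2 F1 F2 where
    pairs [simp]: "A = (a1,a2)" "B = (b1,b2)" "G = (e1,e2)" "F = (F1,F2)"
    by fastforce
  note AD = bhomD[OF A[unfolded pairs]] and BD = bhomD[OF B[unfolded pairs]]
    and ED = bhomD[OF G[unfolded pairs]] and FD = bhomD[OF F[unfolded pairs]]
  define a where "a = blab p' i"
  have ai: "a1 i \<in> bpos p" "blab p (a1 i) = a" using AD(1,3)[OF i] by (simp_all add: a_def)
  obtain g h where c: "fst (curry_map C d p q r F) (a1 i) = (a, (g,h))"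
      "g = (\<lambda>j\<in>{j \<in> bpos q. blab q j = a}. F1 (a1 i,j))"
      "h = (\<lambda>j\<in>{j \<in> bpos q. blab q j = a}. \<lambda>y\<in>bdir r (F1 (a1 i,j)). snd (F2 (a1 i,j) y))"
      "snd (curry_map C d p q r F) (a1 i) =
         (\<lambda>(j,y)\<in>Sigma {j \<in> bpos q. blab q j = a} (\<lambda>j. bdir r (g j)). fst (F2 (a1 i,j) y))"
    using curry_map_at[OF ai(1), of C d q r F] unfolding ai(2) by auto
  have gh: "(a,(g,h)) \<in> bpos (ihom C d q r)"
    using bhom_pos[OF curry_map_bhom[OF wf(1,3) F] ai(1)] c(1) by simp
  obtain g' h' where N: "fst ?N (a,(g,h)) = (a,(g',h'))" "(a,(g',h')) \<in> bpos (ihom C d q' r')"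
      "\<And>j. j \<in> bpos q' \<Longrightarrow> blab q' j = a \<Longrightarrow> g' j = e1 (g (b1 j))"
      "\<And>j y. j \<in> bpos q' \<Longrightarrow> blab q' j = a \<Longrightarrow> y \<in> bdir r' (g' j) \<Longrightarrow>
         h' j y = b2 j (h (b1 j) (e2 (g (b1 j)) y))"
      "snd ?N (a,(g,h)) = (\<lambda>(j,y)\<in>Sigma {j \<in> bpos q'. blab q' j = a} (\<lambda>j. bdir r' (g' j)).
            (b1 j, e2 (g (b1 j)) y))"
    using ihom_map_at[OF wf(5) B G gh] by auto
  obtain gK hK where L: "fst (curry_map C d p' q' r' ?K) i = (a, (gK,hK))"
      "gK = (\<lambda>j\<in>{j \<in> bpos q'. blab q' j = a}. fst ?K (i,j))"
      "hK = (\<lambda>j\<in>{j \<in> bpos q'. blab q' j = a}. \<lambda>y\<in>bdir r' (fst ?K (i,j)). snd (snd ?K (i,j) y))"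
      "snd (curry_map C d p' q' r' ?K) i =
         (\<lambda>(j,y)\<in>Sigma {j \<in> bpos q'. blab q' j = a} (\<lambda>j. bdir r' (gK j)). fst (snd ?K (i,j) y))"
    using curry_map_at[OF i, of C d q' r' ?K] unfolding a_def by blast
  have j: "b1 j \<in> bpos q" "blab q (b1 j) = a" "(i,j) \<in> bpos (tensor p' q')"
    "F1 (a1 i, b1 j) \<in> bpos r" "g (b1 j) = F1 (a1 i, b1 j)" "g' j = e1 (F1 (a1 i, b1 j))"
    "gK j = e1 (F1 (a1 i, b1 j))"
    if "j \<in> bpos q'" "blab q' j = a" for j
  proof -
    show j1: "b1 j \<in> bpos q" "blab q (b1 j) = a" using BD(1,3) that by auto
    show "F1 (a1 i, b1 j) \<in> bpos r" using FD(1) j1 ai by simp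
    show j2: "(i,j) \<in> bpos (tensor p' q')" using i that by (simp add: a_def)
    show g: "g (b1 j) = F1 (a1 i, b1 j)" using j1 by (simp add: c(2))
    show "g' j = e1 (F1 (a1 i, b1 j))" using N(3)[OF that] g by simp
    show "gK j = e1 (F1 (a1 i, b1 j))"
      using that bcomp_tensor_map_apply(1)[OF A B F G j2] by (simp add: L(2))
  qed
  note KF = bcomp_tensor_map_apply(1)[OF A B F G j(3), simplified]
    and KS = bcomp_tensor_map_apply(2)[OF A B F G j(3), simplified]
  have w: "e2 (F1 (a1 i, b1 j)) y \<in> bdir r (F1 (a1 i, b1 j))"
    if "j \<in> bpos q'" "blab q' j = a" "y \<in> bdir r' (e1 (F1 (a1 i, b1 j)))" for j y
    using cmorD(1)[OF ED(5)[OF j(4)[OF that(1,2)]] that(3)] .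
  have M: "fst ?M i = (a,(g,h))" using i c(1) by (simp add: bcomp_apply)
  have "(gK,hK) = (g',h')"
  proof (rule bhom_eqI)
    show "(gK,hK) \<in> bhom d (summand q' a) (summand r' a)"
      using bhom_pos[OF curry_map_bhom[OF wf(4,5) K] i] L(1) by simp
    show "(g',h') \<in> bhom d (summand q' a) (summand r' a)" using N(2) by simp
    fix j assume "j \<in> bpos (summand q' a)"
    then have j': "j \<in> bpos q'" "blab q' j = a" by simp_all
    note jj = j[OF j']
    show "fst (gK,hK) j = fst (g',h') j" using jj by simp
    fix y assume "y \<in> bdir (summand r' a) (fst (gK,hK) j)"
    then have y': "y \<in> bdir r' (e1 (F1 (a1 i, b1 j)))" using jj by simp
    show "snd (gK,hK) j y = snd (g',h') j y"
      using N(4)[OF j'] jj KF[OF j'] KS[OF j' y'] w[OF j' y'] y' j' by (simp add: L(3) c(3))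
  qed
  then show "fst (curry_map C d p' q' r' ?K) i = fst (bcomp p' (ihom C d q' r') ?M ?N) i"
    using i L(1) M N(1) by (simp add: bcomp_apply)
  fix z assume "z \<in> bdir (ihom C d q' r') (fst (curry_map C d p' q' r' ?K) i)"
  then obtain j y where z: "z = (j,y)" "j \<in> bpos q'" "blab q' j = a" "y \<in> bdir r' (gK j)"
    using L(1) by auto
  note jj = j[OF z(2,3)]
  have y': "y \<in> bdir r' (e1 (F1 (a1 i, b1 j)))" using z jj by simp
  have "snd (curry_map C d p' q' r' ?K) i z = a2 i (fst (F2 (a1 i, b1 j) (e2 (F1 (a1 i, b1 j)) y)))"
    using L(4) z KS[OF z(2,3) y'] by simp
  also have "\<dots> = snd ?M i (snd ?N (a,(g,h)) z)"
    using N(5) z jj i ai w[OF z(2,3) y'] c(1,4) by (simp add: bcomp_apply)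
  also have "\<dots> = snd (bcomp p' (ihom C d q' r') ?M ?N) i z"
    using i M N(1) z jj y' by (simp add: bcomp_apply)
  finally show "snd (curry_map C d p' q' r' ?K) i z = snd (bcomp p' (ihom C d q' r') ?M ?N) i z" .
qed

theorem proposition2p46:
  fixes C :: "'c set" and d :: "('o,'m) cat"
    and p :: "('c,'i,'e,'o,'m) bicomod" and q :: "('c,'j,'f,'o,'m) bicomod"
    and r :: "('c,'k,'g,'o,'m) bicomod"
    and p' :: "('c,'i2,'e2,'o,'m) bicomod" and q' :: "('c,'j2,'f2,'o,'m) bicomod"
    and r' :: "('c,'k2,'g2,'o,'m) bicomod"
    and q'' :: "('c,'j3,'f3,'o,'m) bicomod" and r'' :: "('c,'k3,'g3,'o,'m) bicomod"
  assumes d: "small_cat d"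
    and wf: "wf_bicomod C d p" "wf_bicomod C d q" "wf_bicomod C d r"
      "wf_bicomod C d p'" "wf_bicomod C d q'" "wf_bicomod C d r'"
      "wf_bicomod C d q''" "wf_bicomod C d r''"
  shows
    "wf_bicomod C d (tensor p q) \<and>
     wf_bicomod C d (ihom C d q r) \<and>
     (\<forall>A B. A \<in> bhom d q' q \<longrightarrow> B \<in> bhom d r r' \<longrightarrow>
        ihom_map C d q r q' r' A B \<in> bhom d (ihom C d q r) (ihom C d q' r')) \<and>
     ihom_map C d q r q r (bid q) (bid r) = bid (ihom C d q r) \<and>
     (\<forall>A A' B B'. A \<in> bhom d q' q \<longrightarrow> A' \<in> bhom d q'' q' \<longrightarrow>
        B \<in> bhom d r r' \<longrightarrow> B' \<in> bhom d r' r'' \<longrightarrow>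
        ihom_map C d q r q'' r'' (bcomp q'' q A' A) (bcomp r r'' B B')
          = bcomp (ihom C d q r) (ihom C d q'' r'')
              (ihom_map C d q r q' r' A B) (ihom_map C d q' r' q'' r'' A' B')) \<and>
     bij_betw (curry_map C d p q r) (bhom d (tensor p q) r) (bhom d p (ihom C d q r)) \<and>
     (\<forall>A B G F. A \<in> bhom d p' p \<longrightarrow> B \<in> bhom d q' q \<longrightarrow> G \<in> bhom d r r' \<longrightarrow>
        F \<in> bhom d (tensor p q) r \<longrightarrow>
        curry_map C d p' q' r'
          (bcomp (tensor p' q') r' (bcomp (tensor p' q') r (tensor_map p q p' q' A B) F) G)
        = bcomp p' (ihom C d q' r')
            (bcomp p' (ihom C d q r) A (curry_map C d p q r F))
            (ihom_map C d q r q' r' B G))"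
  using wf_tensor[OF wf(1,2)] wf_ihom[OF wf(3)] ihom_map_bhom[OF wf(3,6)] ihom_map_id[OF wf(2,3)]
    ihom_map_comp[OF wf(2,3,6,8)] curry_map_bij[OF wf(1,3)] curry_map_natural[OF wf(1,2,3,4,6)]
  by blast

end
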